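(* Consider the power-market model described in the context, fix a day $k$, a parameter $\eta>0$ and the queue state $\mathbf{Q}(t_k)$. For a price vector $\mathbf{p}(k)=(p(k,t))_{t=0}^{T-1}\in\mathcal{P}$ define $$\Phi(\mathbf{p}(k))=\sum_{t=0}^{T-1}\mathbb{E}\Big[\eta\sum_{n=1}^N U_n(L_n(k,t),t)-\eta\,\text{Cost}(k,t)+\sum_n Q_n(t_k+t)\,L^{\mathsf{d}}_n(p(k,t),t)\,\Big|\,\mathbf{Q}(t_k)\Big],$$ $$\Phi^{\mathsf{A}}(\mathbf{p}(k))=\sum_{t=0}^{T-1}\mathbb{E}\Big[\eta\sum_{n=1}^N U_n(L_n(k,t),t)-\eta\,\text{Cost}(k,t)+\sum_n Q_n(t_k)\,L^{\mathsf{d}}_n(p(k,t),t)\,\Big|\,\mathbf{Q}(t_k)\Big],$$ where the loads are those induced by the prices. Let $\Phi^*$ be the maximum of $\Phi$ over $\mathcal{P}$ and let $\mathbf{p}^{\mathsf{A}}(k)$ be a maximizer of $\Phi^{\mathsf{A}}$ over $\mathcal{P}$. Then $$\Phi^{\mathsf{A}}(\mathbf{p}^{\mathsf{A}}(k))\ge \Phi^*-TC_0,\qquad C_0=\frac{T-1}{2}\sum_n\big([L_n^{\max}]^2+[L_n^{\mathsf{av}}]^2\big).$$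
   Context: Days $k=0,1,\dots$ are divided into $T$ slots, $t_k=kT$. The utility company chooses user prices $\mathbf{p}(k)=(p(k,t))_t$ from a compact set $\mathcal{P}\subseteq[0,p_{\max}]^T$. Each of $N$ users has an increasing continuous utility $U_n(L,t)$; given price $p(k,t)$, user $n$ chooses the intended load $L^{\mathsf{d}}_n(p(k,t),t)$ as the smallest maximizer over $L\in[L_n^{\min}(t),L_n^{\mathsf{d},\max}]$ of $\mathbb{E}[U_n(L+w_n(k,t),t)-p(k,t)(L+w_n(k,t))]$, and actually consumes $L_n(k,t)=L^{\mathsf{d}}_n(k,t)+w_n(k,t)$ with $w_n$ zero-mean random deviations, where $0\le L_n(k,t)\le L_n^{\max}$. $\text{Cost}(k,t)=\beta(k,t)B(k,t)+\alpha(k,t)[L(k,t)-B(k,t)-X(k,t)]^+$ is the power procurement cost ($X$ renewable power, $B$ base-power bought at day-ahead price $\beta$, deficit bought at real-time price $\alpha$, $L=\sum_n L_n$). Deficit queues: $Q_n(0)=0$, $Q_n(t_k+t+1)=[Q_n(t_k+t)-L_n(k,t)]^++L_n^{\mathsf{av}}$, with constants $L_n^{\mathsf{av}}\ge0$; $\mathbf{Q}=(Q_n)_n$. *)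

theory Defs
  imports "HOL-Probability.Probability"
begin

text \<open>Actual load of user n in slot t of the fixed day, under price vector p
  (indexed by slots): intended load at price p t plus the random deviation.\<close>
definition load :: "(nat \<Rightarrow> nat \<Rightarrow> real \<Rightarrow> real) \<Rightarrow> (nat \<Rightarrow> nat \<Rightarrow> 'a \<Rightarrow> real)
    \<Rightarrow> (nat \<Rightarrow> real) \<Rightarrow> nat \<Rightarrow> nat \<Rightarrow> 'a \<Rightarrow> real" where
  "load Ld w p n t x = Ld n t (p t) + w n t x"

text \<open>Deficit queue within the fixed day: queue q0 Lav L n t x is Q_n(t_k + t),
  starting from the given state Q_n(t_k) = q0 n.\<close>
fun queue :: "(nat \<Rightarrow> real) \<Rightarrow> (nat \<Rightarrow> real) \<Rightarrow> (nat \<Rightarrow> nat \<Rightarrow> 'a \<Rightarrow> real)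
    \<Rightarrow> nat \<Rightarrow> nat \<Rightarrow> 'a \<Rightarrow> real" where
  "queue q0 Lav L n 0 x = q0 n"
| "queue q0 Lav L n (Suc t) x = max (queue q0 Lav L n t x - L n t x) 0 + Lav n"

definition cost :: "(nat \<Rightarrow> real) \<Rightarrow> (nat \<Rightarrow> real) \<Rightarrow> (nat \<Rightarrow> 'a \<Rightarrow> real)
    \<Rightarrow> (nat \<Rightarrow> 'a \<Rightarrow> real) \<Rightarrow> real \<Rightarrow> nat \<Rightarrow> 'a \<Rightarrow> real" where
  "cost beta B alpha X Ltot t x = beta t * B t + alpha t x * max (Ltot - B t - X t x) 0"

definition objective :: "'a measure \<Rightarrow> nat \<Rightarrow> nat \<Rightarrow> real \<Rightarrow> (nat \<Rightarrow> real \<Rightarrow> nat \<Rightarrow> real)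
    \<Rightarrow> (nat \<Rightarrow> nat \<Rightarrow> real \<Rightarrow> real) \<Rightarrow> (nat \<Rightarrow> nat \<Rightarrow> 'a \<Rightarrow> real)
    \<Rightarrow> (nat \<Rightarrow> real) \<Rightarrow> (nat \<Rightarrow> real) \<Rightarrow> (nat \<Rightarrow> 'a \<Rightarrow> real) \<Rightarrow> (nat \<Rightarrow> 'a \<Rightarrow> real)
    \<Rightarrow> (nat \<Rightarrow> nat \<Rightarrow> 'a \<Rightarrow> real) \<Rightarrow> (nat \<Rightarrow> real) \<Rightarrow> real" where
  "objective M N T eta U Ld w beta B alpha X Qw p =
     (\<Sum>t<T. integral\<^sup>L M (\<lambda>x.
        eta * (\<Sum>n<N. U n (load Ld w p n t x) t)
        - eta * cost beta B alpha X (\<Sum>n<N. load Ld w p n t x) t x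
        + (\<Sum>n<N. Qw n t x * Ld n t (p t))))"

definition Phi where
  "Phi M N T eta U Ld w beta B alpha X q0 Lav p =
     objective M N T eta U Ld w beta B alpha X (queue q0 Lav (load Ld w p)) p"

definition PhiA where
  "PhiA M N T eta U Ld w beta B alpha X q0 p =
     objective M N T eta U Ld w beta B alpha X (\<lambda>n t x. q0 n) p"

definition least_maximizer :: "real set \<Rightarrow> (real \<Rightarrow> real) \<Rightarrow> real \<Rightarrow> bool" where
  "least_maximizer S g l \<longleftrightarrow> l \<in> S \<and> (\<forall>l'\<in>S. g l' \<le> g l) \<and> (\<forall>l'\<in>S. g l' = g l \<longrightarrow> l \<le> l')"

end

theory Submission
  imports Defs
begin

text \<open>Replacing the queue weights Q_n(t_k+t) by the frozen Q_n(t_k) costs at most C_0 per slot: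
  within the day each queue grows by at most t L_n^av, the intended load is at most L_n^max,
  and t L_n^av L_n^max \<le> (T-1)/2 ((L_n^max)^2 + (L_n^av)^2).  Hence
  \<Phi>(p) \<le> \<Phi>^A(p) + T C_0 for every admissible p, and the claim follows by comparing
  \<Phi>^A(p^A) \<ge> \<Phi>^A(p^*).  Only the load bounds and the zero mean of the deviations
  matter.\<close>

lemma queue_bounds:
  assumes "0 \<le> q0 n" "0 \<le> Lav n" "\<forall>s<t. 0 \<le> L n s x"
  shows "0 \<le> queue q0 Lav L n t x \<and> queue q0 Lav L n t x \<le> q0 n + real t * Lav n"
  using assms(3)
proof (induction t)
  case 0
  then show ?case using assms(1) by simp
next
  case (Suc t)
  then show ?case using assms(2) by (auto simp: algebra_simps)
qed

lemma queue_measurable: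
  assumes "\<forall>s<t. L n s \<in> borel_measurable M"
  shows "queue q0 Lav L n t \<in> borel_measurable M"
  using assms
proof (induction t)
  case 0
  have "queue q0 Lav L n 0 = (\<lambda>x. q0 n)" by auto
  then show ?case by simp
next
  case (Suc t)
  have "queue q0 Lav L n (Suc t) = (\<lambda>x. max (queue q0 Lav L n t x - L n t x) 0 + Lav n)"
    by auto
  then show ?case using Suc by auto
qed

lemma (in prob_space) zero_mean_shift_bounds:
  fixes w :: "'a \<Rightarrow> real"
  assumes "integrable M w" "integral\<^sup>L M w = 0" "\<forall>x\<in>space M. a \<le> c + w x \<and> c + w x \<le> b"
  shows "a \<le> c \<and> c \<le> b"
proof -
  have c_eq: "integral\<^sup>L M (\<lambda>x. c + w x) = c"
    using assms(1,2) by (simp add: prob_space)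
  have "integral\<^sup>L M (\<lambda>x. a) \<le> integral\<^sup>L M (\<lambda>x. c + w x)"
    using assms by (intro integral_mono) auto
  moreover have "integral\<^sup>L M (\<lambda>x. c + w x) \<le> integral\<^sup>L M (\<lambda>x. b)"
    using assms by (intro integral_mono) auto
  ultimately show ?thesis using c_eq by (simp add: prob_space)
qed

text \<open>No integrability of f is needed: if f is not integrable, both integrals are 0,
  which is why c has to be nonnegative.\<close>
lemma (in prob_space) integral_add_diff_le:
  fixes f g h :: "'a \<Rightarrow> real"
  assumes "integrable M g" "integrable M h"
    and "\<forall>x\<in>space M. g x - h x \<le> c" "0 \<le> c"
  shows "integral\<^sup>L M (\<lambda>x. f x + g x) - integral\<^sup>L M (\<lambda>x. f x + h x) \<le> c"
proof (cases "integrable M f")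
  case True
  have "integral\<^sup>L M (\<lambda>x. g x - h x) \<le> integral\<^sup>L M (\<lambda>x. c)"
    using assms by (intro integral_mono) auto
  then show ?thesis using True assms(1,2) by (simp add: prob_space)
next
  case False
  have "\<not> integrable M (\<lambda>x. f x + k x)" if "integrable M k" for k
  proof
    assume "integrable M (\<lambda>x. f x + k x)"
    then have "integrable M (\<lambda>x. (f x + k x) - k x)"
      using that by (rule Bochner_Integration.integrable_diff)
    then show False using False by simp
  qed
  then show ?thesis using assms by (simp add: not_integrable_integral_eq)
qed

lemma objective_weights_diff_le:
  assumes "prob_space M" "0 \<le> c"
    and "\<forall>t<T. \<forall>n<N. integrable M (Qw n t) \<and> integrable M (Qw' n t)"
    and "\<forall>t<T. \<forall>x\<in>space M. (\<Sum>n<N. (Qw n t x - Qw' n t x) * Ld n t (p t)) \<le> c"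
  shows "objective M N T eta U Ld w beta B alpha X Qw p
           - objective M N T eta U Ld w beta B alpha X Qw' p \<le> real T * c"
proof -
  have "integral\<^sup>L M (\<lambda>x. F x + (\<Sum>n<N. Qw n t x * Ld n t (p t)))
      - integral\<^sup>L M (\<lambda>x. F x + (\<Sum>n<N. Qw' n t x * Ld n t (p t))) \<le> c"
    if "t < T" for t and F :: "_ \<Rightarrow> real"
    using that assms
    by (intro prob_space.integral_add_diff_le)
       (auto simp: sum_subtractf[symmetric] left_diff_distrib)
  then have "objective M N T eta U Ld w beta B alpha X Qw p
           - objective M N T eta U Ld w beta B alpha X Qw' p \<le> (\<Sum>t<T. c)"
    unfolding objective_def sum_subtractf[symmetric] by (intro sum_mono) simp
  then show ?thesis by simp
qed

lemma drift_times_load_le: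
  fixes d a l m s t :: real
  assumes "d \<le> t * a" "0 \<le> t" "t \<le> s" "0 \<le> a" "0 \<le> l" "l \<le> m"
  shows "d * l \<le> s / 2 * (m\<^sup>2 + a\<^sup>2)"
proof -
  have "d * l \<le> t * (a * m)"
    using assms by (metis mult.assoc mult_left_mono mult_nonneg_nonneg mult_right_mono order.trans)
  also have "\<dots> \<le> t * ((m\<^sup>2 + a\<^sup>2) / 2)"
    using assms(2) sum_squares_ge_zero[of "m - a" 0]
    by (intro mult_left_mono) (auto simp: power2_eq_square algebra_simps)
  also have "\<dots> \<le> s / 2 * (m\<^sup>2 + a\<^sup>2)"
    using assms(3) by (simp add: mult_right_mono)
  finally show ?thesis .
qed

lemma Phi_le_PhiA_add:
  assumes "prob_space M"
    and p_range: "\<forall>t<T. 0 \<le> p t \<and> p t \<le> pmax"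
    and w_meas: "\<forall>n<N. \<forall>t<T. w n t \<in> borel_measurable M \<and> integrable M (w n t)
                   \<and> integral\<^sup>L M (w n t) = 0"
    and Lav_nonneg: "\<forall>n<N. 0 \<le> Lav n"
    and q0_nonneg: "\<forall>n<N. 0 \<le> q0 n"
    and L_bounds: "\<forall>n<N. \<forall>t<T. \<forall>pr\<in>{0..pmax}. \<forall>x\<in>space M.
        0 \<le> Ld n t pr + w n t x \<and> Ld n t pr + w n t x \<le> Lmax n"
  shows "Phi M N T eta U Ld w beta B alpha X q0 Lav p
           \<le> PhiA M N T eta U Ld w beta B alpha X q0 p
             + real T * ((real T - 1) / 2 * (\<Sum>n<N. (Lmax n)^2 + (Lav n)^2))"
proof -
  interpret prob_space M by fact
  define Q where "Q = queue q0 Lav (load Ld w p)"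
  have load_bounds: "0 \<le> load Ld w p n t x \<and> load Ld w p n t x \<le> Lmax n"
    if "n < N" "t < T" "x \<in> space M" for n t x
    using L_bounds p_range that unfolding load_def by auto
  have Ld_bounds: "0 \<le> Ld n t (p t) \<and> Ld n t (p t) \<le> Lmax n" if "n < N" "t < T" for n t
    using w_meas load_bounds that by (intro zero_mean_shift_bounds[of "w n t"]) (auto simp: load_def)
  have Q_bounds: "0 \<le> Q n t x \<and> Q n t x \<le> q0 n + real t * Lav n"
    if "n < N" "t \<le> T" "x \<in> space M" for n t x
    unfolding Q_def using that Lav_nonneg q0_nonneg load_bounds by (intro queue_bounds) auto
  have Q_integrable: "integrable M (Q n t)" if "n < N" "t < T" for n t
  proof (rule integrable_const_bound)
    have "load Ld w p n s \<in> borel_measurable M" if "s < T" for s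
    proof -
      have "w n s \<in> borel_measurable M" using w_meas that \<open>n < N\<close> by auto
      then show ?thesis unfolding load_def by measurable
    qed
    then show "Q n t \<in> borel_measurable M"
      unfolding Q_def using that by (intro queue_measurable) auto
    show "AE x in M. norm (Q n t x) \<le> q0 n + real t * Lav n"
      using Q_bounds that by (intro AE_I2) fastforce
  qed
  have gap: "(\<Sum>n<N. (Q n t x - q0 n) * Ld n t (p t))
      \<le> (real T - 1) / 2 * (\<Sum>n<N. (Lmax n)^2 + (Lav n)^2)"
    if "t < T" "x \<in> space M" for t x
  proof -
    have "(\<Sum>n<N. (Q n t x - q0 n) * Ld n t (p t))
        \<le> (\<Sum>n<N. (real T - 1) / 2 * ((Lmax n)^2 + (Lav n)^2))"
    proof (rule sum_mono)
      fix n assume "n \<in> {..<N}"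
      then have "Q n t x - q0 n \<le> real t * Lav n"
        using Q_bounds[of n t x] that by auto
      then show "(Q n t x - q0 n) * Ld n t (p t) \<le> (real T - 1) / 2 * ((Lmax n)^2 + (Lav n)^2)"
        using \<open>n \<in> {..<N}\<close> that Ld_bounds Lav_nonneg by (intro drift_times_load_le) auto
    qed
    then show ?thesis by (simp add: sum_distrib_left)
  qed
  have "Phi M N T eta U Ld w beta B alpha X q0 Lav p - PhiA M N T eta U Ld w beta B alpha X q0 p
      \<le> real T * ((real T - 1) / 2 * (\<Sum>n<N. (Lmax n)^2 + (Lav n)^2))"
  proof (cases "T = 0")
    case True
    then show ?thesis unfolding Phi_def PhiA_def objective_def by simp
  next
    case False
    then have "0 \<le> (real T - 1) / 2 * (\<Sum>n<N. (Lmax n)^2 + (Lav n)^2)"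
      by (intro mult_nonneg_nonneg sum_nonneg) auto
    then show ?thesis
      unfolding Phi_def PhiA_def Q_def[symmetric] using gap Q_integrable assms(1)
      by (intro objective_weights_diff_le) auto
  qed
  then show ?thesis by simp
qed

theorem lemma4:
  fixes M :: "'a measure" and N T :: nat and eta pmax :: real
    and U :: "nat \<Rightarrow> real \<Rightarrow> nat \<Rightarrow> real"
    and Lmin :: "nat \<Rightarrow> nat \<Rightarrow> real" and Ldmax Lmax Lav q0 :: "nat \<Rightarrow> real"
    and Ld :: "nat \<Rightarrow> nat \<Rightarrow> real \<Rightarrow> real" and w :: "nat \<Rightarrow> nat \<Rightarrow> 'a \<Rightarrow> real"
    and beta B :: "nat \<Rightarrow> real" and alpha X :: "nat \<Rightarrow> 'a \<Rightarrow> real"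
    and P :: "(nat \<Rightarrow> real) set" and pstar pA :: "nat \<Rightarrow> real"
  assumes "prob_space M"
    and P_sub: "P \<subseteq> {p. \<forall>t. (t < T \<longrightarrow> 0 \<le> p t \<and> p t \<le> pmax) \<and> (T \<le> t \<longrightarrow> p t = 0)}"
    and "compact P"
    and "eta > 0"
    and U_props: "\<forall>n<N. \<forall>t<T. mono (\<lambda>L. U n L t) \<and> continuous_on UNIV (\<lambda>L. U n L t)"
    and w_meas: "\<forall>n<N. \<forall>t<T. w n t \<in> borel_measurable M \<and> integrable M (w n t)
                   \<and> integral\<^sup>L M (w n t) = 0"
    and Lav_nonneg: "\<forall>n<N. 0 \<le> Lav n"
    and q0_nonneg: "\<forall>n<N. 0 \<le> q0 n"
    and Ld_def: "\<forall>n<N. \<forall>t<T. \<forall>pr\<in>{0..pmax}.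
        least_maximizer {Lmin n t..Ldmax n}
          (\<lambda>l. integral\<^sup>L M (\<lambda>x. U n (l + w n t x) t - pr * (l + w n t x))) (Ld n t pr)"
    and L_bounds: "\<forall>n<N. \<forall>t<T. \<forall>pr\<in>{0..pmax}. \<forall>x\<in>space M.
        0 \<le> Ld n t pr + w n t x \<and> Ld n t pr + w n t x \<le> Lmax n"
    and pstar_max: "pstar \<in> P" "\<forall>p\<in>P. Phi M N T eta U Ld w beta B alpha X q0 Lav p
                                 \<le> Phi M N T eta U Ld w beta B alpha X q0 Lav pstar"
    and pA_max: "pA \<in> P" "\<forall>p\<in>P. PhiA M N T eta U Ld w beta B alpha X q0 p
                                 \<le> PhiA M N T eta U Ld w beta B alpha X q0 pA"
  shows "PhiA M N T eta U Ld w beta B alpha X q0 pA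
           \<ge> Phi M N T eta U Ld w beta B alpha X q0 Lav pstar
             - real T * ((real T - 1) / 2 * (\<Sum>n<N. (Lmax n)^2 + (Lav n)^2))"
proof -
  have "\<forall>t<T. 0 \<le> pstar t \<and> pstar t \<le> pmax"
    using P_sub pstar_max(1) by auto
  then have "Phi M N T eta U Ld w beta B alpha X q0 Lav pstar
      \<le> PhiA M N T eta U Ld w beta B alpha X q0 pstar
        + real T * ((real T - 1) / 2 * (\<Sum>n<N. (Lmax n)^2 + (Lav n)^2))"
    by (rule Phi_le_PhiA_add[OF assms(1) _ w_meas Lav_nonneg q0_nonneg L_bounds])
  moreover have "PhiA M N T eta U Ld w beta B alpha X q0 pstar
      \<le> PhiA M N T eta U Ld w beta B alpha X q0 pA"
    using pA_max(2) pstar_max(1) by blast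
  ultimately show ?thesis by linarith
qed

end
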